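(* For all integers $i,j,\ell$, $$\mathcal P_i(s)\mathcal P_{\ell+j}(s)-\mathcal P_j(s)\mathcal P_{\ell+i}(s)=(s^2-s+1)^{3j}\mathcal P_{i-j}(s)\mathcal P_\ell(s)$$ and $$\mathcal P_i(s)\mathcal Q_{\ell+j}(s)-\mathcal P_j(s)\mathcal Q_{\ell+i}(s)=(s^2-s+1)^{3j}\mathcal P_{i-j}(s)\mathcal Q_\ell(s).$$
   Context: Let $\mathbb F$ be a field of characteristic different from $3$ containing a primitive cube root of unity $\zeta_3$. For $i\in\mathbb Z$ define the rational functions in $\mathbb F(s)$ $$\mathcal P_i(s)=\frac{(s+\zeta_3)^{3i}-(s+\zeta_3^2)^{3i}}{3(\zeta_3-\zeta_3^2)s(s-1)},\qquad \mathcal Q_i(s)=\frac{\frac{1-\zeta_3}{3}(s+\zeta_3)^{3i-1}+\frac{1-\zeta_3^2}{3}(s+\zeta_3^2)^{3i-1}}{s-1}.$$ *)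

theory Defs
  imports "HOL-Computational_Algebra.Polynomial" "HOL-Computational_Algebra.Fraction_Field"
begin

text \<open>The field of rational functions F(s) is rendered as the fraction field of F[s].\<close>

definition cst :: "'a::field \<Rightarrow> 'a poly fract" where
  "cst c = Fract [:c:] 1"

definition svar :: "'a::field poly fract" where
  "svar = Fract [:0, 1:] 1"

definition calP :: "'a::field \<Rightarrow> int \<Rightarrow> 'a poly fract" where
  "calP z i = ((svar + cst z) powi (3 * i) - (svar + cst (z^2)) powi (3 * i))
              / (cst (3 * (z - z^2)) * svar * (svar - 1))"

definition calQ :: "'a::field \<Rightarrow> int \<Rightarrow> 'a poly fract" where
  "calQ z i = (cst ((1 - z) / 3) * (svar + cst z) powi (3 * i - 1)
              + cst ((1 - z^2) / 3) * (svar + cst (z^2)) powi (3 * i - 1))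
              / (svar - 1)"

end

theory Submission
  imports Defs
begin

text \<open>Put \<open>a = (s + \<zeta>\<^sub>3)\<^sup>3\<close> and \<open>b = (s + \<zeta>\<^sub>3\<^sup>2)\<^sup>3\<close>. Then \<open>P\<^sub>n\<close> and \<open>Q\<^sub>n\<close> are, up to
  fixed denominators, the two-term exponential sums \<open>a\<^sup>n - b\<^sup>n\<close> and \<open>x a\<^sup>n + y b\<^sup>n\<close>,
  and \<open>a b = (s\<^sup>2 - s + 1)\<^sup>3\<close> because \<open>\<zeta>\<^sub>3 + \<zeta>\<^sub>3\<^sup>2 = -1\<close> and \<open>\<zeta>\<^sub>3\<^sup>3 = 1\<close>. Both identities
  are then instances of one exchange identity for such sums, valid for any nonzero
  \<open>a, b\<close> in a field; the first is the case \<open>x = 1, y = -1\<close>.\<close>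

lemma powi_exchange:
  fixes a b x y :: "'a::field"
  assumes "a \<noteq> 0" and "b \<noteq> 0"
  shows "(a powi i - b powi i) * (x * a powi (l + j) + y * b powi (l + j))
           - (a powi j - b powi j) * (x * a powi (l + i) + y * b powi (l + i))
         = (a * b) powi j * (a powi (i - j) - b powi (i - j)) * (x * a powi l + y * b powi l)"
proof -
  obtain k where "i = j + k" by (rule that[of "i - j"]) simp
  then show ?thesis
    using assms by (simp add: power_int_add power_int_mult_distrib algebra_simps)
qed

lemma powi_exchange_divide:
  fixes a b x y D E :: "'a::field"
  assumes "a \<noteq> 0" and "b \<noteq> 0"
  defines "f \<equiv> \<lambda>n. (a powi n - b powi n) / D"
      and "g \<equiv> \<lambda>n. (x * a powi n + y * b powi n) / E"
  shows "f i * g (l + j) - f j * g (l + i) = (a * b) powi j * f (i - j) * g l"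
  using powi_exchange[OF assms(1,2), of i x l j y] unfolding f_def g_def
  by (simp add: times_divide_times_eq flip: diff_divide_distrib)

lemma cube_root_of_unity_sum:
  fixes z :: "'a::field"
  assumes "z ^ 3 = 1" and "z \<noteq> 1"
  shows "z + z ^ 2 = -1"
proof -
  have "(z - 1) * (z ^ 2 + z + 1) = 0"
    using assms(1) by (simp add: algebra_simps power3_eq_cube power2_eq_square)
  with assms(2) have "z ^ 2 + z + 1 = 0"
    by simp
  then show ?thesis
    by (simp add: algebra_simps eq_neg_iff_add_eq_0)
qed

lemma cst_add: "cst (u + v) = cst u + cst v"
  by (simp add: cst_def)

lemma cst_mult: "cst (u * v) = cst u * cst v"
  by (simp add: cst_def mult.commute)

lemma cst_1: "cst 1 = 1"
  by (simp add: cst_def One_fract_def one_pCons)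

lemma cst_uminus: "cst (- u) = - cst u"
  by (simp add: cst_def)

lemma svar_plus_cst_nonzero: "svar + cst c \<noteq> 0"
  by (simp add: svar_def cst_def Zero_fract_def eq_fract)

lemma svar_plus_cube_roots_mult:
  fixes z :: "'a::field"
  assumes "z ^ 3 = 1" and "z \<noteq> 1"
  shows "(svar + cst z) * (svar + cst (z ^ 2)) = svar ^ 2 - svar + 1"
proof -
  have "(svar + cst z) * (svar + cst (z ^ 2)) = svar ^ 2 + cst (z + z ^ 2) * svar + cst (z * z ^ 2)"
    by (simp add: cst_add cst_mult algebra_simps power2_eq_square)
  also have "\<dots> = svar ^ 2 - svar + 1"
    using assms by (simp add: cube_root_of_unity_sum cst_uminus cst_1 flip: power_Suc)
  finally show ?thesis .
qed

lemma powi_three_times: "(x::'a::field) powi (3 * n) = (x ^ 3) powi n"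
  by (simp add: power_int_power)

theorem lemma3p4:
  fixes z :: "'a::field" and i j l :: int
  assumes "(3::'a) \<noteq> 0" and "z ^ 3 = 1" and "z \<noteq> 1"
  shows "(calP z i * calP z (l + j) - calP z j * calP z (l + i)
           = (svar^2 - svar + 1) powi (3 * j) * calP z (i - j) * calP z l)
    \<and> (calP z i * calQ z (l + j) - calP z j * calQ z (l + i)
           = (svar^2 - svar + 1) powi (3 * j) * calP z (i - j) * calQ z l)"
proof -
  define a where "a = (svar + cst z) ^ 3"
  define b where "b = (svar + cst (z ^ 2)) ^ 3"
  define D where "D = cst (3 * (z - z ^ 2)) * svar * (svar - 1)"
  define x where "x = cst ((1 - z) / 3) / (svar + cst z)"
  define y where "y = cst ((1 - z ^ 2) / 3) / (svar + cst (z ^ 2))"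
  have nonzero: "a \<noteq> 0" "b \<noteq> 0"
    by (simp_all add: a_def b_def svar_plus_cst_nonzero)
  have P: "calP z n = (a powi n - b powi n) / D" for n
    unfolding calP_def D_def a_def b_def powi_three_times ..
  have Q: "calQ z n = (x * a powi n + y * b powi n) / (svar - 1)" for n
    unfolding calQ_def x_def y_def a_def b_def
    by (simp add: power_int_diff svar_plus_cst_nonzero powi_three_times)
  have "(svar^2 - svar + 1) powi (3 * j) = (a * b) powi j"
    unfolding a_def b_def powi_three_times svar_plus_cube_roots_mult[OF assms(2,3), symmetric]
    by (simp add: power_mult_distrib)
  then show ?thesis
    unfolding P Q
    using powi_exchange_divide[OF nonzero, where x = 1 and y = "-1" and E = D]
      powi_exchange_divide[OF nonzero, where x = x and y = y and E = "svar - 1"]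
    by simp
qed

end
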